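(* Let $T$ be an oriented tree and $U=\{v\in V(T):\deg^-_T(v)\geq 2\}$. Suppose that $T$ is grounded, that the minimal subtree of $T$ containing $U$ is an out-arborescence, that $|U|\geq 2$, and that $T$ has no leaf of in-degree $1$. Then there exist integers $k\ge 1$ and $\ell\ge 1$ such that $T$ is isomorphic to a subgraph of $T(k,\ell)$.
   Context: An oriented tree is an orientation of an undirected tree. For an oriented tree $T$, a height function $h_T\colon V(T)\to\mathbb{Z}$ satisfies $h_T(v)=h_T(u)+1$ for every edge $(u,v)\in E(T)$ (unique up to an additive constant); $T$ is grounded if $h_T$ is constant on the vertices of in-degree at least $2$. An out-arborescence is an oriented tree with all edges oriented away from a designated root. $B^+_{k,\ell}$ is the complete $\ell$-ary tree of depth $k$ (distance from root to leaves $k$) with all edges oriented away from the root. $S^-_{k,\ell}$ is the $(k-1)$-subdivision of the in-star with $\ell$ leaves: a centre vertex together with $\ell$ directed paths of length $k$ ending at the centre, pairwise sharing only the centre. $T(k,\ell)$ is the oriented tree obtained from $B^+_{k,\ell}$ by identifying each leaf with the centre of a new (disjoint) copy of $S^-_{k,\ell}$. *)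

theory Defs
  imports Main
begin

definition und :: "('a \<times> 'a) set \<Rightarrow> ('a \<times> 'a) set" where
  "und E = E \<union> E\<inverse>"

definition induced :: "'a set \<Rightarrow> ('a \<times> 'a) set \<Rightarrow> ('a \<times> 'a) set" where
  "induced W E = E \<inter> (W \<times> W)"

definition und_connected :: "'a set \<Rightarrow> ('a \<times> 'a) set \<Rightarrow> bool" where
  "und_connected V E \<longleftrightarrow> (\<forall>u\<in>V. \<forall>v\<in>V. (u, v) \<in> (und E)\<^sup>*)"

definition oriented_tree :: "'a set \<Rightarrow> ('a \<times> 'a) set \<Rightarrow> bool" where
  "oriented_tree V E \<longleftrightarrow> finite V \<and> V \<noteq> {} \<and> E \<subseteq> V \<times> V
     \<and> (\<forall>v. (v, v) \<notin> E) \<and> (\<forall>u v. (u, v) \<in> E \<longrightarrow> (v, u) \<notin> E)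
     \<and> und_connected V E \<and> card E + 1 = card V"

definition indeg :: "'a set \<Rightarrow> ('a \<times> 'a) set \<Rightarrow> 'a \<Rightarrow> nat" where
  "indeg V E v = card {u \<in> V. (u, v) \<in> E}"

definition outdeg :: "'a set \<Rightarrow> ('a \<times> 'a) set \<Rightarrow> 'a \<Rightarrow> nat" where
  "outdeg V E v = card {w \<in> V. (v, w) \<in> E}"

definition is_leaf :: "'a set \<Rightarrow> ('a \<times> 'a) set \<Rightarrow> 'a \<Rightarrow> bool" where
  "is_leaf V E v \<longleftrightarrow> v \<in> V \<and> indeg V E v + outdeg V E v = 1"

definition branch_verts :: "'a set \<Rightarrow> ('a \<times> 'a) set \<Rightarrow> 'a set" where
  "branch_verts V E = {v \<in> V. indeg V E v \<ge> 2}"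

definition height_fun :: "('a \<times> 'a) set \<Rightarrow> ('a \<Rightarrow> int) \<Rightarrow> bool" where
  "height_fun E h \<longleftrightarrow> (\<forall>(u, v) \<in> E. h v = h u + 1)"

text \<open>Grounded: a height function is constant on the vertices of in-degree at least 2
  (height functions are unique up to an additive constant, so "some" = "every").\<close>
definition grounded :: "'a set \<Rightarrow> ('a \<times> 'a) set \<Rightarrow> bool" where
  "grounded V E \<longleftrightarrow> (\<exists>h. height_fun E h \<and>
      (\<forall>u \<in> branch_verts V E. \<forall>w \<in> branch_verts V E. h u = h w))"

definition min_subtree_verts :: "'a set \<Rightarrow> ('a \<times> 'a) set \<Rightarrow> 'a set \<Rightarrow> 'a set" where
  "min_subtree_verts V E U =
     \<Inter> {W. U \<subseteq> W \<and> W \<subseteq> V \<and> und_connected W (induced W E)}"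

definition out_arborescence :: "'a set \<Rightarrow> ('a \<times> 'a) set \<Rightarrow> bool" where
  "out_arborescence V E \<longleftrightarrow> oriented_tree V E \<and> (\<exists>r \<in> V. \<forall>v \<in> V. (r, v) \<in> E\<^sup>*)"

definition subgraph_iso :: "'a set \<Rightarrow> ('a \<times> 'a) set \<Rightarrow> 'b set \<Rightarrow> ('b \<times> 'b) set \<Rightarrow> bool" where
  "subgraph_iso V E V' E' \<longleftrightarrow> (\<exists>f. inj_on f V \<and> f ` V \<subseteq> V' \<and>
      (\<forall>(u, v) \<in> E. (f u, f v) \<in> E'))"

text \<open>Vertex (xs,0,0) with xs a word over {0..<l} of length \<le> k is the
  vertex xs of B^+_{k,l} (root = []). For a leaf w (length k), vertex (w,j,t) with j<l,
  1 \<le> t \<le> k is the vertex at distance t from the centre w on the j-th in-path of the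
  copy of S^-_{k,l} attached at w.\<close>
definition Tk_verts :: "nat \<Rightarrow> nat \<Rightarrow> (nat list \<times> nat \<times> nat) set" where
  "Tk_verts k l =
     {(xs, 0, 0) | xs. length xs \<le> k \<and> set xs \<subseteq> {..<l}}
   \<union> {(w, j, t) | w j t. length w = k \<and> set w \<subseteq> {..<l} \<and> j < l \<and> 1 \<le> t \<and> t \<le> k}"

definition Tk_edges :: "nat \<Rightarrow> nat \<Rightarrow> ((nat list \<times> nat \<times> nat) \<times> (nat list \<times> nat \<times> nat)) set" where
  "Tk_edges k l =
     {((xs, 0, 0), (xs @ [i], 0, 0)) | xs i. length xs < k \<and> set xs \<subseteq> {..<l} \<and> i < l}
   \<union> {((w, j, Suc t), (w, j, t)) | w j t. length w = k \<and> set w \<subseteq> {..<l} \<and> j < l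
        \<and> 1 \<le> t \<and> Suc t \<le> k}
   \<union> {((w, j, 1), (w, 0, 0)) | w j. length w = k \<and> set w \<subseteq> {..<l} \<and> j < l}"

end

(*
  Let U be the set of branch vertices, r the root of the out-arborescence spanned by U, and h a
  height function with h = h0 on U. A sink outside U would be a leaf of in-degree 1, so every
  directed path ends in U and h <= h0 everywhere. Root the underlying tree at r. An edge from a
  vertex to its child only occurs among the vertices reachable from r, so every other vertex
  points to its parent: it lies either on the stem, the directed path ending at r, or on a
  directed path entering U from below. Since vertices outside U have in-degree at most 1, such a
  path is determined by its last vertex and its length.

  Put k = h0 - min h and l = |V| and label V injectively by {0..<l}. A reachable vertex v goes to
  the word of B^+(k,l) made of h r - min h zeros followed by the labels on the path from r to v
  (branch vertices, at height h0, become leaves); a stem vertex v goes to the all-zero word of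
  length h v - min h; and a vertex at distance t below u in U, whose path enters u through w, goes
  to the vertex at distance t on the in-path numbered by the label of w in the copy of S^-(k,l)
  attached at the leaf of u.
*)

theory Submission
  imports Defs
begin

lemma height_fun_relpow:
  assumes "height_fun E h" and "(a, b) \<in> E ^^ n"
  shows "h b = h a + int n"
  using assms(2)
proof (induction n arbitrary: b)
  case 0
  then show ?case by simp
next
  case (Suc n)
  then obtain y where "(a, y) \<in> E ^^ n" and "(y, b) \<in> E"
    by (meson relpow_Suc_E)
  with Suc.IH assms(1) show ?case
    by (fastforce simp: height_fun_def)
qed

lemma height_fun_rtrancl_le:
  assumes "height_fun E h" and "(a, b) \<in> E\<^sup>*"
  shows "h a \<le> h b"
proof -
  obtain n where "(a, b) \<in> E ^^ n"
    using assms(2) rtrancl_power by blast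
  with assms(1) show ?thesis
    by (simp add: height_fun_relpow)
qed

lemma height_fun_rtrancl_less:
  assumes "height_fun E h" and "(a, b) \<in> E\<^sup>*" and "a \<noteq> b"
  shows "h a < h b"
proof -
  obtain n where n: "(a, b) \<in> E ^^ n"
    using assms(2) rtrancl_power by blast
  with assms(3) have "n \<noteq> 0"
    by (cases n) auto
  with assms(1) n show ?thesis
    by (simp add: height_fun_relpow)
qed

lemma funpow_Suc_apply: "(f ^^ n) (f x) = (f ^^ Suc n) x"
  by (simp add: funpow_Suc_right del: funpow.simps)

lemma funpow_reaches_level:
  fixes f :: "'a \<Rightarrow> 'a" and h :: "'a \<Rightarrow> int"
  assumes step: "\<And>v. v \<in> P \<Longrightarrow> h (f v) = h v + 1 \<and> (f v \<in> P \<or> f v \<in> T)"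
    and below: "\<And>v. v \<in> P \<Longrightarrow> h v < t"
    and level: "\<And>v. v \<in> T \<Longrightarrow> h v = t"
    and "v \<in> P"
  shows "(\<forall>i < nat (t - h v). (f ^^ i) v \<in> P) \<and> (f ^^ nat (t - h v)) v \<in> T"
proof -
  have "(\<forall>i < n. (f ^^ i) v \<in> P) \<and> (f ^^ n) v \<in> T" if "v \<in> P" "n = nat (t - h v)" for n v
    using that
  proof (induction n arbitrary: v)
    case 0
    then show ?case using below by fastforce
  next
    case (Suc n)
    from step[OF Suc.prems(1)] consider "f v \<in> T" | "f v \<in> P"
      by blast
    then show ?case
    proof cases
      case 1
      with Suc.prems step level have "n = 0"
        by fastforce
      with 1 Suc.prems(1) show ?thesis
        by simp
    next
      case 2
      with Suc.prems step have "(\<forall>i < n. (f ^^ i) (f v) \<in> P) \<and> (f ^^ n) (f v) \<in> T"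
        by (intro Suc.IH) auto
      with Suc.prems(1) show ?thesis
        by (auto simp: funpow_Suc_apply less_Suc_eq_0_disj simp del: funpow.simps)
    qed
  qed
  with assms(4) show ?thesis by blast
qed

lemma Tk_verts_B: "length xs \<le> k \<Longrightarrow> set xs \<subseteq> {..<l} \<Longrightarrow> (xs, 0, 0) \<in> Tk_verts k l"
  unfolding Tk_verts_def by blast

lemma Tk_verts_S:
  "length w = k \<Longrightarrow> set w \<subseteq> {..<l} \<Longrightarrow> j < l \<Longrightarrow> 1 \<le> t \<Longrightarrow> t \<le> k
    \<Longrightarrow> (w, j, t) \<in> Tk_verts k l"
  unfolding Tk_verts_def by blast

lemma Tk_edges_B:
  "length xs < k \<Longrightarrow> set xs \<subseteq> {..<l} \<Longrightarrow> i < l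
    \<Longrightarrow> ((xs, 0, 0), (xs @ [i], 0, 0)) \<in> Tk_edges k l"
  unfolding Tk_edges_def by blast

lemma Tk_edges_S:
  "length w = k \<Longrightarrow> set w \<subseteq> {..<l} \<Longrightarrow> j < l \<Longrightarrow> 1 \<le> t \<Longrightarrow> Suc t \<le> k
    \<Longrightarrow> ((w, j, Suc t), (w, j, t)) \<in> Tk_edges k l"
  unfolding Tk_edges_def by blast

lemma Tk_edges_S_centre:
  "length w = k \<Longrightarrow> set w \<subseteq> {..<l} \<Longrightarrow> j < l \<Longrightarrow> ((w, j, 1), (w, 0, 0)) \<in> Tk_edges k l"
  unfolding Tk_edges_def by blast

locale rooted_oriented_tree =
  fixes V :: "'a set" and E :: "('a \<times> 'a) set" and r :: 'a
  assumes oriented_tree: "oriented_tree V E"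
    and root_in_V: "r \<in> V"
begin

lemma finite_V: "finite V"
  using oriented_tree by (simp add: oriented_tree_def)

lemma edges_in_V: "E \<subseteq> V \<times> V"
  using oriented_tree by (simp add: oriented_tree_def)

lemma finite_E: "finite E"
  using finite_V edges_in_V finite_subset by blast

lemma asym_edge: "(u, v) \<in> E \<Longrightarrow> (v, u) \<notin> E"
  using oriented_tree by (simp add: oriented_tree_def)

lemma card_E: "card E + 1 = card V"
  using oriented_tree by (simp add: oriented_tree_def)

lemma card_V_pos: "0 < card V"
  using finite_V root_in_V card_gt_0_iff by blast

lemma und_rtrancl: "u \<in> V \<Longrightarrow> v \<in> V \<Longrightarrow> (u, v) \<in> (und E)\<^sup>*"
  using oriented_tree by (simp add: oriented_tree_def und_connected_def)

lemma und_edge_in_V: "(u, v) \<in> und E \<Longrightarrow> u \<in> V \<and> v \<in> V"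
  using edges_in_V by (auto simp: und_def)

definition tree_dist :: "'a \<Rightarrow> nat" where
  "tree_dist v = (LEAST n. (r, v) \<in> (und E) ^^ n)"

lemma tree_dist_path: "v \<in> V \<Longrightarrow> (r, v) \<in> (und E) ^^ tree_dist v"
proof -
  assume "v \<in> V"
  then obtain n where "(r, v) \<in> (und E) ^^ n"
    using und_rtrancl root_in_V rtrancl_power by blast
  then show ?thesis
    unfolding tree_dist_def by (rule LeastI)
qed

lemma tree_dist_le: "(r, v) \<in> (und E) ^^ n \<Longrightarrow> tree_dist v \<le> n"
  unfolding tree_dist_def by (rule Least_le)

lemma tree_dist_eq_0_iff: "v \<in> V \<Longrightarrow> tree_dist v = 0 \<longleftrightarrow> v = r"
  using tree_dist_path[of v] tree_dist_le[of r 0] by auto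

lemma parent_exists:
  assumes "v \<in> V" and "v \<noteq> r"
  shows "\<exists>p. p \<in> V \<and> (p, v) \<in> und E \<and> tree_dist v = Suc (tree_dist p)"
proof -
  obtain m where m: "tree_dist v = Suc m"
    using assms tree_dist_eq_0_iff by (cases "tree_dist v") auto
  then have "(r, v) \<in> (und E) ^^ Suc m"
    using tree_dist_path assms(1) by metis
  then obtain p where p: "(r, p) \<in> (und E) ^^ m" "(p, v) \<in> und E"
    by (meson relpow_Suc_E)
  then have "(r, v) \<in> (und E) ^^ Suc (tree_dist p)"
    using tree_dist_path[of p] und_edge_in_V by auto
  with p m tree_dist_le have "tree_dist v = Suc (tree_dist p)"
    by (metis Suc_le_mono le_antisym)
  with p und_edge_in_V show ?thesis by blast
qed

definition parent :: "'a \<Rightarrow> 'a" where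
  "parent v = (SOME p. p \<in> V \<and> (p, v) \<in> und E \<and> tree_dist v = Suc (tree_dist p))"

lemma parent:
  "v \<in> V \<Longrightarrow> v \<noteq> r
    \<Longrightarrow> parent v \<in> V \<and> (parent v, v) \<in> und E \<and> tree_dist v = Suc (tree_dist (parent v))"
  unfolding parent_def using parent_exists by (rule someI_ex)

definition parent_edge :: "'a \<Rightarrow> 'a \<times> 'a" where
  "parent_edge v = (if (parent v, v) \<in> E then (parent v, v) else (v, parent v))"

lemma parent_edge_inj_on: "inj_on parent_edge (V - {r})"
proof (rule inj_onI)
  fix v w
  assume "v \<in> V - {r}" and "w \<in> V - {r}" and eq: "parent_edge v = parent_edge w"
  then have dist: "tree_dist v = Suc (tree_dist (parent v))"
    "tree_dist w = Suc (tree_dist (parent w))"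
    using parent by auto
  from eq have "v = w \<or> (v = parent w \<and> parent v = w)"
    unfolding parent_edge_def by (auto split: if_splits)
  with dist show "v = w" by auto
qed

text \<open>A tree has one edge fewer than vertices, so the injection of the non-root vertices
  into the edges is onto: every edge joins a vertex to its parent.\<close>

lemma parent_edge_image: "parent_edge ` (V - {r}) = E"
proof (rule card_subset_eq[OF finite_E])
  show "parent_edge ` (V - {r}) \<subseteq> E"
    using parent unfolding parent_edge_def und_def by auto
  show "card (parent_edge ` (V - {r})) = card E"
    using card_image[OF parent_edge_inj_on] card_E root_in_V finite_V by simp
qed

lemma edge_parent_cases:
  assumes "(a, b) \<in> E"
  shows "(b \<noteq> r \<and> parent b = a \<and> tree_dist b = Suc (tree_dist a))
    \<or> (a \<noteq> r \<and> parent a = b \<and> tree_dist a = Suc (tree_dist b))"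
proof -
  obtain v where v: "v \<in> V - {r}" "(a, b) = parent_edge v"
    using assms parent_edge_image by blast
  then have "tree_dist v = Suc (tree_dist (parent v))"
    using parent by auto
  with v show ?thesis
    unfolding parent_edge_def by (auto split: if_splits)
qed

definition reach :: "'a set" where
  "reach = {v. (r, v) \<in> E\<^sup>*}"

lemma root_in_reach: "r \<in> reach"
  unfolding reach_def by simp

lemma reach_subset_V: "reach \<subseteq> V"
  unfolding reach_def using root_in_V edges_in_V by (auto elim: rtranclE)

lemma root_relpow_parent:
  "(r, v) \<in> E ^^ n
    \<Longrightarrow> tree_dist v = n \<and> (0 < n \<longrightarrow> (r, parent v) \<in> E ^^ (n - 1) \<and> (parent v, v) \<in> E)"
proof (induction n arbitrary: v)
  case 0
  then show ?case using tree_dist_eq_0_iff root_in_V by simp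
next
  case (Suc n)
  then obtain y where y: "(r, y) \<in> E ^^ n" "(y, v) \<in> E"
    by (meson relpow_Suc_E)
  with Suc.IH have IH:
    "tree_dist y = n \<and> (0 < n \<longrightarrow> (r, parent y) \<in> E ^^ (n - 1) \<and> (parent y, y) \<in> E)"
    by blast
  from edge_parent_cases[OF y(2)] show ?case
  proof
    assume "v \<noteq> r \<and> parent v = y \<and> tree_dist v = Suc (tree_dist y)"
    with IH y show ?thesis by simp
  next
    assume c: "y \<noteq> r \<and> parent y = v \<and> tree_dist y = Suc (tree_dist v)"
    with y(1) have "n \<noteq> 0" by (cases n) auto
    with IH c have "(v, y) \<in> E" by simp
    with y(2) asym_edge show ?thesis by blast
  qed
qed

lemma reach_parent: "v \<in> reach \<Longrightarrow> v \<noteq> r \<Longrightarrow> parent v \<in> reach \<and> (parent v, v) \<in> E"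
proof -
  assume "v \<in> reach" "v \<noteq> r"
  then obtain n where n: "(r, v) \<in> E ^^ n"
    unfolding reach_def using rtrancl_power by blast
  with \<open>v \<noteq> r\<close> have "0 < n"
    by (cases n) auto
  with n have "(r, parent v) \<in> E ^^ (n - 1) \<and> (parent v, v) \<in> E"
    using root_relpow_parent by blast
  then show ?thesis
    unfolding reach_def using relpow_imp_rtrancl by blast
qed

lemma reach_parent_induct [consumes 1, case_names root step]:
  assumes "v \<in> reach"
    and root: "P r"
    and step: "\<And>v. v \<in> reach \<Longrightarrow> v \<noteq> r \<Longrightarrow> P (parent v) \<Longrightarrow> P v"
  shows "P v"
proof -
  have "\<forall>v \<in> reach. tree_dist v = n \<longrightarrow> P v" for n
  proof (induction n)
    case 0
    then show ?case using tree_dist_eq_0_iff reach_subset_V root by auto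
  next
    case (Suc n)
    show ?case
    proof (intro ballI impI)
      fix v
      assume v: "v \<in> reach" "tree_dist v = Suc n"
      then have "v \<noteq> r"
        using tree_dist_eq_0_iff[OF root_in_V] by auto
      moreover from v this have "tree_dist (parent v) = n"
        using parent reach_subset_V by fastforce
      ultimately show "P v"
        using Suc.IH v(1) reach_parent step by blast
    qed
  qed
  with assms(1) show ?thesis by blast
qed

end

primrec path_word :: "('a \<Rightarrow> 'a) \<Rightarrow> ('a \<Rightarrow> nat) \<Rightarrow> nat \<Rightarrow> 'a \<Rightarrow> nat list" where
  "path_word p lab 0 v = []"
| "path_word p lab (Suc n) v = path_word p lab n (p v) @ [lab v]"

locale grounded_rooted_tree = rooted_oriented_tree +
  fixes h :: "'a \<Rightarrow> int" and h0 :: int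
  assumes height_fun: "height_fun E h"
    and branch_height: "u \<in> branch_verts V E \<Longrightarrow> h u = h0"
    and root_reaches_branch: "u \<in> branch_verts V E \<Longrightarrow> (r, u) \<in> E\<^sup>*"
    and two_branch_verts: "card (branch_verts V E) \<ge> 2"
    and no_leaf_indeg_1: "is_leaf V E v \<Longrightarrow> indeg V E v \<noteq> 1"
begin

abbreviation U :: "'a set" where
  "U \<equiv> branch_verts V E"

lemma edge_height: "(u, v) \<in> E \<Longrightarrow> h v = h u + 1"
  using height_fun by (auto simp: height_fun_def)

lemma branch_verts_subset_reach: "U \<subseteq> reach"
  using root_reaches_branch unfolding reach_def by blast

lemma root_not_branch: "r \<notin> U"
proof
  assume "r \<in> U"
  have "\<not> U \<subseteq> {r}"
    using two_branch_verts card_mono[of "{r}" U] by auto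
  then obtain u where "u \<in> U" and "u \<noteq> r"
    by blast
  with \<open>r \<in> U\<close> show False
    using height_fun_rtrancl_less[OF height_fun root_reaches_branch] branch_height by fastforce
qed

lemma root_out_edge: "\<exists>w. (r, w) \<in> E"
proof -
  obtain u where "u \<in> U"
    using two_branch_verts by (metis card.empty ex_in_conv not_numeral_le_zero)
  with root_not_branch root_reaches_branch show ?thesis
    by (metis converse_rtranclE)
qed

lemma two_in_neighbours_branch:
  assumes "(v, w) \<in> E" and "(v', w) \<in> E" and "v \<noteq> v'"
  shows "w \<in> U"
proof -
  have "{v, v'} \<subseteq> {x \<in> V. (x, w) \<in> E}"
    using assms edges_in_V by auto
  then have "card {v, v'} \<le> indeg V E w"
    unfolding indeg_def using finite_V by (intro card_mono) auto
  with assms(1,3) edges_in_V show "w \<in> U"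
    unfolding branch_verts_def by auto
qed

lemma sink_in_branch:
  assumes "(y, z) \<in> E" and "\<forall>w. (z, w) \<notin> E"
  shows "z \<in> U"
proof (rule ccontr)
  assume "z \<notin> U"
  have "y \<in> V" and "z \<in> V"
    using assms(1) edges_in_V by auto
  with assms(1) have "indeg V E z \<noteq> 0"
    unfolding indeg_def using finite_V by (auto simp: card_eq_0_iff)
  moreover have "indeg V E z < 2"
    using \<open>z \<notin> U\<close> \<open>z \<in> V\<close> unfolding branch_verts_def by auto
  moreover have "outdeg V E z = 0"
    using assms(2) by (simp add: outdeg_def)
  ultimately have "is_leaf V E z" and "indeg V E z = 1"
    using \<open>z \<in> V\<close> unfolding is_leaf_def by auto
  with no_leaf_indeg_1 show False
    by blast
qed

text \<open>A highest vertex reachable from \<open>b\<close> is a sink, hence a branch vertex.\<close>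

lemma edge_reaches_branch:
  assumes "(a, b) \<in> E"
  shows "\<exists>z \<in> U. (b, z) \<in> E\<^sup>*"
proof -
  define D where "D = {z \<in> V. (b, z) \<in> E\<^sup>*}"
  have "finite D" and "b \<in> D"
    using finite_V assms edges_in_V unfolding D_def by auto
  then have "Max (h ` D) \<in> h ` D"
    by (intro Max_in) auto
  then obtain z where "z \<in> D" and z_max: "h z = Max (h ` D)"
    by auto
  have "(z, w) \<notin> E" for w
  proof
    assume "(z, w) \<in> E"
    with \<open>z \<in> D\<close> edges_in_V have "w \<in> D"
      unfolding D_def by (auto intro: rtrancl_into_rtrancl)
    with \<open>finite D\<close> z_max have "h w \<le> h z"
      by simp
    with \<open>(z, w) \<in> E\<close> show False
      using edge_height by fastforce
  qed
  moreover from \<open>z \<in> D\<close> have "(b, z) \<in> E\<^sup>*"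
    unfolding D_def by simp
  then have "\<exists>y. (y, z) \<in> E"
    using assms by (cases rule: rtranclE) auto
  ultimately have "z \<in> U"
    using sink_in_branch by blast
  with \<open>(b, z) \<in> E\<^sup>*\<close> show ?thesis
    by blast
qed

lemma out_edge_height_less: "(v, w) \<in> E \<Longrightarrow> h v < h0"
  using edge_reaches_branch height_fun_rtrancl_le[OF height_fun] branch_height edge_height
  by fastforce

lemma height_le: "v \<in> V \<Longrightarrow> h v \<le> h0"
proof (cases "\<exists>w. (v, w) \<in> E")
  case True
  then show ?thesis
    using out_edge_height_less by fastforce
next
  case False
  moreover assume "v \<in> V"
  moreover from False root_out_edge have "v \<noteq> r"
    by blast
  ultimately have "(parent v, v) \<in> E"
    using parent unfolding und_def by blast
  with False have "v \<in> U"
    using sink_in_branch by blast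
  then show ?thesis
    using branch_height by simp
qed

lemma reach_height: "v \<in> reach \<Longrightarrow> h v = h r + int (tree_dist v)"
proof -
  assume "v \<in> reach"
  then obtain n where "(r, v) \<in> E ^^ n"
    unfolding reach_def using rtrancl_power by blast
  then show ?thesis
    using root_relpow_parent height_fun_relpow[OF height_fun] by simp
qed

text \<open>A directed path leaving \<open>a\<close> through its child \<open>b\<close> can never step back towards \<open>r\<close>,
  so it consists of successive children; walking back along parents from its end, which lies
  in \<open>reach\<close>, stays in \<open>reach\<close>.\<close>

lemma child_path_to_reach:
  "(a, b) \<in> E \<Longrightarrow> tree_dist b = Suc (tree_dist a) \<Longrightarrow> (b, z) \<in> E ^^ n \<Longrightarrow> z \<in> reach
    \<Longrightarrow> a \<in> reach"
proof (induction n arbitrary: a b)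
  case 0
  then have "b \<in> reach" and "b \<noteq> r" and "parent b = a"
    using edge_parent_cases[OF "0.prems"(1)] by auto
  then show ?case
    using reach_parent by metis
next
  case (Suc n)
  then obtain y where y: "(b, y) \<in> E" "(y, z) \<in> E ^^ n"
    by (meson relpow_Suc_D2)
  have b: "parent b = a" "b \<noteq> r"
    using edge_parent_cases[OF Suc.prems(1)] Suc.prems(2) by auto
  moreover have "(b, a) \<notin> E"
    using asym_edge Suc.prems(1) by blast
  ultimately have "tree_dist y = Suc (tree_dist b)"
    using edge_parent_cases[OF y(1)] y(1) by auto
  then have "b \<in> reach"
    using Suc.IH[OF y(1) _ y(2) Suc.prems(4)] by blast
  with b show ?case
    using reach_parent by metis
qed

lemma child_edge_from_reach:
  assumes "(a, b) \<in> E" and "tree_dist b = Suc (tree_dist a)"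
  shows "a \<in> reach"
proof -
  obtain z n where "z \<in> U" and "(b, z) \<in> E ^^ n"
    using edge_reaches_branch[OF assms(1)] rtrancl_power by blast
  with assms branch_verts_subset_reach show ?thesis
    using child_path_to_reach by blast
qed

lemma outside_reach_parent_edge:
  assumes "v \<in> V" and "v \<notin> reach"
  shows "v \<noteq> r \<and> (v, parent v) \<in> E"
proof -
  have "v \<noteq> r"
    using assms(2) root_in_reach by blast
  with assms(1) have p: "(parent v, v) \<in> und E" "tree_dist v = Suc (tree_dist (parent v))"
    using parent by blast+
  have "(parent v, v) \<notin> E"
  proof
    assume e: "(parent v, v) \<in> E"
    with p have "parent v \<in> reach"
      using child_edge_from_reach by blast
    with e assms(2) show False
      unfolding reach_def by (simp add: rtrancl_into_rtrancl)
  qed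
  with p \<open>v \<noteq> r\<close> show ?thesis
    unfolding und_def by auto
qed

definition stem :: "'a set" where
  "stem = {v \<in> V. v \<noteq> r \<and> (v, r) \<in> E\<^sup>*}"

lemma stem_height_less: "v \<in> stem \<Longrightarrow> h v < h r"
  unfolding stem_def using height_fun_rtrancl_less[OF height_fun] by blast

lemma stem_not_reach: "v \<in> stem \<Longrightarrow> v \<notin> reach"
  using stem_height_less reach_height by fastforce

lemma stem_step:
  assumes "v \<in> stem"
  shows "(v, parent v) \<in> E \<and> (parent v = r \<or> parent v \<in> stem)"
proof -
  have "v \<in> V" "v \<noteq> r" "(v, r) \<in> E\<^sup>*" and "v \<notin> reach"
    using assms stem_not_reach unfolding stem_def by auto
  then obtain y where y: "(v, y) \<in> E" "(y, r) \<in> E\<^sup>*"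
    by (metis converse_rtranclE)
  with \<open>v \<notin> reach\<close> have "parent v = y"
    using edge_parent_cases[OF y(1)] child_edge_from_reach by blast
  with y \<open>v \<in> V\<close> \<open>v \<notin> reach\<close> show ?thesis
    using outside_reach_parent_edge edges_in_V unfolding stem_def by auto
qed

lemma stem_chain:
  assumes "v \<in> stem"
  shows "(\<forall>i < nat (h r - h v). (parent ^^ i) v \<in> stem) \<and> (parent ^^ nat (h r - h v)) v = r"
proof -
  have step: "h (parent w) = h w + 1 \<and> (parent w \<in> stem \<or> parent w \<in> {r})" if "w \<in> stem" for w
    using stem_step[OF that] edge_height[of w "parent w"] by blast
  have level: "w \<in> {r} \<Longrightarrow> h w = h r" for w
    by simp
  from funpow_reaches_level[where f = parent and h = h, OF step stem_height_less level assms]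
  show ?thesis
    by simp
qed

definition pendant :: "'a set" where
  "pendant = V - reach - stem"

lemma pendant_step:
  assumes "v \<in> pendant"
  shows "(v, parent v) \<in> E \<and> (parent v \<in> pendant \<or> parent v \<in> U)"
proof -
  have v: "v \<in> V" "v \<notin> reach" "v \<notin> stem"
    using assms unfolding pendant_def by auto
  then have e: "(v, parent v) \<in> E" and "parent v \<in> V"
    using outside_reach_parent_edge edges_in_V by auto
  have "(v, r) \<notin> E\<^sup>*"
    using v root_in_reach unfolding stem_def by auto
  with e have "parent v \<noteq> r" and "parent v \<notin> stem"
    unfolding stem_def by (auto intro: converse_rtrancl_into_rtrancl)
  moreover have "parent v \<in> U" if "parent v \<in> reach"
  proof -
    from reach_parent[OF that \<open>parent v \<noteq> r\<close>] v(2)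
    have "(parent (parent v), parent v) \<in> E" and "parent (parent v) \<noteq> v"
      by auto
    with e show ?thesis
      using two_in_neighbours_branch by blast
  qed
  ultimately show ?thesis
    using e \<open>parent v \<in> V\<close> unfolding pendant_def by blast
qed

lemma pendant_height_less: "v \<in> pendant \<Longrightarrow> h v < h0"
  using pendant_step out_edge_height_less by meson

lemma pendant_chain:
  assumes "v \<in> pendant"
  shows "(\<forall>i < nat (h0 - h v). (parent ^^ i) v \<in> pendant) \<and> (parent ^^ nat (h0 - h v)) v \<in> U"
proof -
  have step: "h (parent w) = h w + 1 \<and> (parent w \<in> pendant \<or> parent w \<in> U)"
    if "w \<in> pendant" for w
    using pendant_step[OF that] edge_height[of w "parent w"] by blast
  show ?thesis
    by (rule funpow_reaches_level[where f = parent and h = h,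
          OF step pendant_height_less branch_height assms])
qed

text \<open>Vertices outside \<open>U\<close> have in-degree at most one, so an out-path that avoids \<open>U\<close>
  after its first vertex is determined by its last vertex and its length.\<close>

lemma parent_chain_inj:
  assumes "\<forall>i<n. (parent ^^ i) v \<in> V - reach \<and> (parent ^^ i) v' \<in> V - reach"
    and "\<forall>i<n. (parent ^^ Suc i) v \<notin> U"
    and "(parent ^^ n) v = (parent ^^ n) v'"
  shows "v = v'"
  using assms
proof (induction n arbitrary: v v')
  case 0
  then show ?case by simp
next
  case (Suc n)
  from Suc.prems have "v \<in> V - reach" "v' \<in> V - reach" "parent v \<notin> U"
    and "\<forall>i<n. (parent ^^ i) (parent v) \<in> V - reach \<and> (parent ^^ i) (parent v') \<in> V - reach"
    and "\<forall>i<n. (parent ^^ Suc i) (parent v) \<notin> U"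
    and "(parent ^^ n) (parent v) = (parent ^^ n) (parent v')"
    by (simp_all add: All_less_Suc2 funpow_Suc_apply[symmetric] del: funpow.simps)
  then have "(v, parent v) \<in> E" "(v', parent v') \<in> E" "parent v \<notin> U" "parent v = parent v'"
    using outside_reach_parent_edge Suc.IH by blast+
  then show ?case
    using two_in_neighbours_branch by metis
qed

lemma stem_subset: "stem \<subseteq> V - reach"
  using stem_not_reach unfolding stem_def by blast

lemma pendant_subset: "pendant \<subseteq> V - reach"
  unfolding pendant_def by blast

lemma vertex_cases:
  assumes "v \<in> V"
  obtains "v \<in> reach" | "v \<in> stem" | "v \<in> pendant"
  using assms unfolding pendant_def by blast

definition label :: "'a \<Rightarrow> nat" where
  "label = (SOME g. bij_betw g V {0..<card V})"

lemma label_bij: "bij_betw label V {0..<card V}"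
  unfolding label_def using ex_bij_betw_finite_nat[OF finite_V] by (rule someI_ex)

lemma label_less: "v \<in> V \<Longrightarrow> label v < card V"
  using label_bij by (auto simp: bij_betw_def)

lemma label_inj: "v \<in> V \<Longrightarrow> w \<in> V \<Longrightarrow> label v = label w \<Longrightarrow> v = w"
  using label_bij by (auto simp: bij_betw_def inj_on_def)

definition hmin :: int where
  "hmin = Min (h ` V)"

lemma hmin_le: "v \<in> V \<Longrightarrow> hmin \<le> h v"
  unfolding hmin_def using finite_V by simp

definition depth :: nat where
  "depth = nat (h0 - hmin)"

lemma depth_pos: "1 \<le> depth"
proof -
  obtain w where "(r, w) \<in> E"
    using root_out_edge by blast
  then have "h r < h0"
    by (rule out_edge_height_less)
  then show ?thesis
    unfolding depth_def using hmin_le[OF root_in_V] by simp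
qed

lemma pendant_leg:
  assumes "v \<in> pendant" and "m = nat (h0 - h v)"
  shows "1 \<le> m" and "m \<le> depth" and "\<forall>i<m. (parent ^^ i) v \<in> pendant"
    and "(parent ^^ (m - 1)) v \<in> pendant" and "(parent ^^ m) v \<in> U"
proof -
  have "v \<in> V"
    using assms(1) pendant_subset by blast
  with assms show "1 \<le> m" and "m \<le> depth"
    using pendant_height_less hmin_le unfolding depth_def by fastforce+
  from assms show "\<forall>i<m. (parent ^^ i) v \<in> pendant" and "(parent ^^ m) v \<in> U"
    using pendant_chain by auto
  with \<open>1 \<le> m\<close> show "(parent ^^ (m - 1)) v \<in> pendant"
    by simp
qed

text \<open>The leading zeros leave room below \<open>r\<close> on the all-zero branch for the stem.\<close>

definition word :: "'a \<Rightarrow> nat list" where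
  "word v = replicate (nat (h r - hmin)) 0 @ path_word parent label (tree_dist v) v"

lemma word_root: "word r = replicate (nat (h r - hmin)) 0"
  unfolding word_def using tree_dist_eq_0_iff[OF root_in_V] by simp

lemma word_snoc: "v \<in> reach \<Longrightarrow> v \<noteq> r \<Longrightarrow> word v = word (parent v) @ [label v]"
proof -
  assume "v \<in> reach" and "v \<noteq> r"
  then have "tree_dist v = Suc (tree_dist (parent v))"
    using parent reach_subset_V by blast
  then show ?thesis
    unfolding word_def by simp
qed

lemma word_length: "v \<in> reach \<Longrightarrow> length (word v) = nat (h v - hmin)"
proof (induction rule: reach_parent_induct)
  case root
  then show ?case
    using word_root by simp
next
  case (step v)
  then have "(parent v, v) \<in> E" and "parent v \<in> V"
    using reach_parent reach_subset_V by blast+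
  then show ?case
    using step word_snoc edge_height hmin_le by fastforce
qed

lemma word_set: "v \<in> reach \<Longrightarrow> set (word v) \<subseteq> {..<card V}"
proof (induction rule: reach_parent_induct)
  case root
  then show ?case
    using word_root card_V_pos by auto
next
  case (step v)
  then show ?case
    using word_snoc label_less reach_subset_V by auto
qed

lemma word_branch: "u \<in> U \<Longrightarrow> length (word u) = depth \<and> set (word u) \<subseteq> {..<card V}"
  using word_length word_set branch_height branch_verts_subset_reach unfolding depth_def by blast

lemma word_inj:
  assumes "v \<in> reach" and "w \<in> reach" and "word v = word w"
  shows "v = w"
proof -
  have "v \<in> V" and "w \<in> V"
    using assms reach_subset_V by auto
  moreover from assms have "nat (h v - hmin) = nat (h w - hmin)"
    using word_length by metis
  ultimately have "h v = h w"
    using hmin_le[OF \<open>v \<in> V\<close>] hmin_le[OF \<open>w \<in> V\<close>] by (simp add: eq_nat_nat_iff)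
  then have dist: "tree_dist v = tree_dist w"
    using assms reach_height by simp
  show ?thesis
  proof (cases "v = r")
    case True
    with dist \<open>w \<in> V\<close> show ?thesis
      using tree_dist_eq_0_iff root_in_V by metis
  next
    case False
    with dist \<open>v \<in> V\<close> \<open>w \<in> V\<close> have "w \<noteq> r"
      using tree_dist_eq_0_iff by metis
    with False assms have "label v = label w"
      using word_snoc by fastforce
    with \<open>v \<in> V\<close> \<open>w \<in> V\<close> show ?thesis
      using label_inj by blast
  qed
qed

definition embedding :: "'a \<Rightarrow> nat list \<times> nat \<times> nat" where
  "embedding v =
    (if v \<in> reach then (word v, 0, 0)
     else if v \<in> stem then (replicate (nat (h v - hmin)) 0, 0, 0)
     else (word ((parent ^^ nat (h0 - h v)) v), label ((parent ^^ (nat (h0 - h v) - 1)) v),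
           nat (h0 - h v)))"

lemma embedding_reach: "v \<in> reach \<Longrightarrow> embedding v = (word v, 0, 0)"
  unfolding embedding_def by simp

lemma embedding_stem: "v \<in> stem \<Longrightarrow> embedding v = (replicate (nat (h v - hmin)) 0, 0, 0)"
  unfolding embedding_def using stem_not_reach by simp

lemma embedding_pendant:
  "v \<in> pendant \<Longrightarrow> m = nat (h0 - h v)
    \<Longrightarrow> embedding v = (word ((parent ^^ m) v), label ((parent ^^ (m - 1)) v), m)"
  unfolding embedding_def pendant_def by simp

lemma embedding_in_Tk_verts:
  assumes "v \<in> V"
  shows "embedding v \<in> Tk_verts depth (card V)"
  using assms
proof (cases rule: vertex_cases)
  case 1
  then show ?thesis
    using embedding_reach word_length word_set height_le[OF assms]
    unfolding depth_def by (auto intro!: Tk_verts_B)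
next
  case 2
  then show ?thesis
    using embedding_stem height_le[OF assms] card_V_pos
    unfolding depth_def by (auto intro!: Tk_verts_B)
next
  case 3
  define m where "m = nat (h0 - h v)"
  note leg = pendant_leg[OF 3 m_def]
  moreover have "label ((parent ^^ (m - 1)) v) < card V"
    using leg(4) pendant_subset label_less by blast
  ultimately show ?thesis
    using embedding_pendant[OF 3 m_def] word_branch by (auto intro!: Tk_verts_S)
qed

lemma embedding_parent_edge_reach:
  assumes "v \<in> reach" and "v \<noteq> r"
  shows "(embedding (parent v), embedding v) \<in> Tk_edges depth (card V)"
proof -
  from assms have p: "parent v \<in> reach" "(parent v, v) \<in> E"
    using reach_parent by auto
  then have "length (word (parent v)) < depth"
    using word_length out_edge_height_less hmin_le reach_subset_V
    unfolding depth_def by fastforce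
  moreover have "embedding v = (word (parent v) @ [label v], 0, 0)"
    using assms embedding_reach word_snoc by simp
  ultimately show ?thesis
    using p assms embedding_reach word_set label_less reach_subset_V by (auto intro!: Tk_edges_B)
qed

lemma embedding_parent_edge_stem:
  assumes "v \<in> stem"
  shows "(embedding v, embedding (parent v)) \<in> Tk_edges depth (card V)"
proof -
  define n where "n = nat (h v - hmin)"
  have "v \<in> V"
    using assms unfolding stem_def by blast
  have step: "(v, parent v) \<in> E" "parent v = r \<or> parent v \<in> stem"
    using stem_step[OF assms] by auto
  then have "nat (h (parent v) - hmin) = Suc n"
    using edge_height[OF step(1)] hmin_le[OF \<open>v \<in> V\<close>] unfolding n_def by arith
  with step have "embedding (parent v) = (replicate (Suc n) 0, 0, 0)"
    using embedding_reach[OF root_in_reach] word_root embedding_stem by auto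
  moreover have "n < depth"
    using stem_height_less[OF assms] height_le[OF root_in_V] hmin_le[OF \<open>v \<in> V\<close>]
    unfolding n_def depth_def by simp
  ultimately show ?thesis
    using Tk_edges_B[of "replicate n 0" depth "card V" 0] embedding_stem[OF assms] card_V_pos
    by (simp add: n_def replicate_append_same set_replicate_conv_if)
qed

lemma embedding_parent_edge_pendant:
  assumes "v \<in> pendant"
  shows "(embedding v, embedding (parent v)) \<in> Tk_edges depth (card V)"
proof -
  define m where "m = nat (h0 - h v)"
  define u where "u = (parent ^^ m) v"
  note leg = pendant_leg[OF assms m_def, folded u_def]
  have w: "length (word u) = depth" "set (word u) \<subseteq> {..<card V}"
    using word_branch leg(5) by auto
  have lab: "label ((parent ^^ (m - 1)) v) < card V"
    using leg(4) pendant_subset label_less by blast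
  have ev: "embedding v = (word u, label ((parent ^^ (m - 1)) v), m)"
    using embedding_pendant[OF assms m_def] unfolding u_def .
  have step: "(v, parent v) \<in> E" "parent v \<in> U \<or> parent v \<in> pendant"
    using pendant_step[OF assms] by auto
  then have hp: "nat (h0 - h (parent v)) = m - 1"
    using edge_height[OF step(1)] unfolding m_def by arith
  from step(2) show ?thesis
  proof
    assume "parent v \<in> U"
    then have "m = 1"
      using hp branch_height leg(1) by simp
    with \<open>parent v \<in> U\<close> ev w lab show ?thesis
      using embedding_reach branch_verts_subset_reach Tk_edges_S_centre unfolding u_def by auto
  next
    assume "parent v \<in> pendant"
    define k where "k = m - 2"
    have k: "m = Suc (Suc k)"
      using hp pendant_height_less[OF \<open>parent v \<in> pendant\<close>] unfolding k_def by arith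
    with hp have "embedding (parent v)
        = (word ((parent ^^ Suc k) (parent v)), label ((parent ^^ k) (parent v)), Suc k)"
      using embedding_pendant[OF \<open>parent v \<in> pendant\<close>, of "Suc k"] by simp
    also have "\<dots> = (word u, label ((parent ^^ Suc k) v), Suc k)"
      unfolding u_def k by (simp only: funpow_Suc_apply)
    finally show ?thesis
      using ev w lab leg(2) k Tk_edges_S[of "word u" depth "card V" _ "Suc k"] by simp
  qed
qed

lemma embedding_edge:
  assumes "(a, b) \<in> E"
  shows "(embedding a, embedding b) \<in> Tk_edges depth (card V)"
  using edge_parent_cases[OF assms]
proof
  assume b: "b \<noteq> r \<and> parent b = a \<and> tree_dist b = Suc (tree_dist a)"
  with assms have "b \<in> reach"
    using child_edge_from_reach unfolding reach_def by (blast intro: rtrancl_into_rtrancl)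
  with b show ?thesis
    using embedding_parent_edge_reach by metis
next
  assume a: "a \<noteq> r \<and> parent a = b \<and> tree_dist a = Suc (tree_dist b)"
  have "a \<in> V"
    using assms edges_in_V by blast
  moreover have "a \<notin> reach"
    using a assms reach_parent asym_edge by blast
  ultimately consider "a \<in> stem" | "a \<in> pendant"
    by (cases rule: vertex_cases) auto
  then show ?thesis
    using embedding_parent_edge_stem embedding_parent_edge_pendant a by cases auto
qed

lemma stem_inj:
  assumes "v \<in> stem" and "w \<in> stem" and "h v = h w"
  shows "v = w"
proof -
  define n where "n = nat (h r - h v)"
  have cv: "\<forall>i<n. (parent ^^ i) v \<in> stem" "(parent ^^ n) v = r"
    using stem_chain[OF assms(1)] unfolding n_def by auto
  have cw: "\<forall>i<n. (parent ^^ i) w \<in> stem" "(parent ^^ n) w = r"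
    using stem_chain[OF assms(2)] unfolding n_def assms(3) by auto
  show ?thesis
  proof (rule parent_chain_inj[of n])
    show "\<forall>i<n. (parent ^^ i) v \<in> V - reach \<and> (parent ^^ i) w \<in> V - reach"
      using cv cw stem_subset by blast
    show "\<forall>i<n. (parent ^^ Suc i) v \<notin> U"
      using cv stem_subset branch_verts_subset_reach root_not_branch
      by (metis DiffD2 Suc_lessI subsetD)
    show "(parent ^^ n) v = (parent ^^ n) w"
      using cv cw by simp
  qed
qed

lemma pendant_inj:
  assumes "v \<in> pendant" and "w \<in> pendant" and "h v = h w" and "m = nat (h0 - h v)"
    and "label ((parent ^^ (m - 1)) v) = label ((parent ^^ (m - 1)) w)"
  shows "v = w"
proof -
  have "\<forall>i<m. (parent ^^ i) v \<in> pendant" and "\<forall>i<m. (parent ^^ i) w \<in> pendant"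
    using pendant_leg(3) assms by auto
  with pendant_subset have cv: "(parent ^^ i) v \<in> V - reach"
    and cw: "(parent ^^ i) w \<in> V - reach" if "i < m" for i
    using that by blast+
  show ?thesis
  proof (rule parent_chain_inj[of "m - 1"])
    show "\<forall>i<m - 1. (parent ^^ i) v \<in> V - reach \<and> (parent ^^ i) w \<in> V - reach"
      using cv cw by simp
    show "\<forall>i<m - 1. (parent ^^ Suc i) v \<notin> U"
    proof (intro allI impI)
      fix i
      assume "i < m - 1"
      then have "Suc i < m"
        by simp
      then show "(parent ^^ Suc i) v \<notin> U"
        using cv[of "Suc i"] branch_verts_subset_reach by blast
    qed
    have "(parent ^^ (m - 1)) v \<in> pendant" and "(parent ^^ (m - 1)) w \<in> pendant"
      using pendant_leg(4)[OF assms(1,4)] pendant_leg(4)[OF assms(2)] assms(3,4) by auto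
    with assms(5) show "(parent ^^ (m - 1)) v = (parent ^^ (m - 1)) w"
      using pendant_subset label_inj by blast
  qed
qed

lemma pendant_iff_embedding_leg:
  assumes "v \<in> V"
  shows "v \<in> pendant \<longleftrightarrow> 0 < snd (snd (embedding v))"
  using assms
proof (cases rule: vertex_cases)
  case 3
  then show ?thesis
    using embedding_pendant pendant_height_less by fastforce
qed (auto simp: embedding_reach embedding_stem pendant_def)

lemma reach_iff_embedding_length:
  assumes "v \<in> V" and "v \<notin> pendant"
  shows "v \<in> reach \<longleftrightarrow> nat (h r - hmin) \<le> length (fst (embedding v))"
  using assms(1)
proof (cases rule: vertex_cases)
  case 1
  then show ?thesis
    using embedding_reach word_length reach_height by simp
next
  case 2
  have "nat (h v - hmin) < nat (h r - hmin)"
    using stem_height_less[OF 2] hmin_le[OF assms(1)] by (simp add: nat_less_eq_zless)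
  with 2 show ?thesis
    using embedding_stem stem_not_reach by auto
qed (use assms(2) in blast)

lemma embedding_inj_on: "inj_on embedding V"
proof (rule inj_onI)
  fix v w
  assume "v \<in> V" and "w \<in> V" and eq: "embedding v = embedding w"
  have "v \<in> pendant \<longleftrightarrow> w \<in> pendant"
    using pendant_iff_embedding_leg \<open>v \<in> V\<close> \<open>w \<in> V\<close> eq by simp
  moreover have "v \<in> reach \<longleftrightarrow> w \<in> reach" if "v \<notin> pendant"
    using reach_iff_embedding_length \<open>v \<in> V\<close> \<open>w \<in> V\<close> eq that calculation by simp
  ultimately consider "v \<in> reach" "w \<in> reach" | "v \<in> stem" "w \<in> stem"
    | "v \<in> pendant" "w \<in> pendant"
    using \<open>v \<in> V\<close> \<open>w \<in> V\<close> unfolding pendant_def by blast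
  then show "v = w"
  proof cases
    case 1
    then show ?thesis
      using eq embedding_reach word_inj by simp
  next
    case 2
    then have "h v = h w"
      using eq embedding_stem hmin_le[OF \<open>v \<in> V\<close>] hmin_le[OF \<open>w \<in> V\<close>]
      by (simp add: eq_nat_nat_iff)
    with 2 show ?thesis
      using stem_inj by blast
  next
    case 3
    define m where "m = nat (h0 - h v)"
    have "nat (h0 - h v) = nat (h0 - h w)"
      using eq embedding_pendant 3 by simp
    then have "h v = h w"
      using pendant_height_less[OF 3(1)] pendant_height_less[OF 3(2)]
      by (simp add: eq_nat_nat_iff)
    with eq 3 have "label ((parent ^^ (m - 1)) v) = label ((parent ^^ (m - 1)) w)"
      using embedding_pendant unfolding m_def by simp
    with 3 \<open>h v = h w\<close> show ?thesis
      using pendant_inj m_def by blast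
  qed
qed

lemma subgraph_iso_Tk: "subgraph_iso V E (Tk_verts depth (card V)) (Tk_edges depth (card V))"
  unfolding subgraph_iso_def using embedding_inj_on embedding_in_Tk_verts embedding_edge by blast

end

lemma min_subtree_root:
  assumes "oriented_tree V E" and "U \<subseteq> V"
    and "out_arborescence (min_subtree_verts V E U) (induced (min_subtree_verts V E U) E)"
  obtains r where "r \<in> V" and "\<And>u. u \<in> U \<Longrightarrow> (r, u) \<in> E\<^sup>*"
proof -
  let ?S = "min_subtree_verts V E U"
  have "induced V E = E"
    using assms(1) unfolding oriented_tree_def induced_def by blast
  with assms(1,2) have "V \<in> {W. U \<subseteq> W \<and> W \<subseteq> V \<and> und_connected W (induced W E)}"
    unfolding oriented_tree_def by simp
  then have "U \<subseteq> ?S" and "?S \<subseteq> V"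
    unfolding min_subtree_verts_def by blast+
  moreover obtain r where "r \<in> ?S" and "\<forall>v \<in> ?S. (r, v) \<in> (induced ?S E)\<^sup>*"
    using assms(3) unfolding out_arborescence_def by blast
  moreover have "induced ?S E \<subseteq> E"
    unfolding induced_def by blast
  ultimately show thesis
    using that rtrancl_mono[of "induced ?S E" E] by blast
qed

lemma grounded_level:
  assumes "grounded V E"
  obtains h h0 where "height_fun E h" and "\<And>u. u \<in> branch_verts V E \<Longrightarrow> h u = h0"
proof -
  obtain h where "height_fun E h"
    and level: "\<forall>u \<in> branch_verts V E. \<forall>w \<in> branch_verts V E. h u = h w"
    using assms unfolding grounded_def by blast
  show thesis
  proof (rule that[OF \<open>height_fun E h\<close>])
    fix u
    assume "u \<in> branch_verts V E"
    with level show "h u = h (SOME u. u \<in> branch_verts V E)"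
      by (metis someI_ex)
  qed
qed

theorem lemma3p1:
  fixes V :: "'a set" and E :: "('a \<times> 'a) set"
  assumes "oriented_tree V E"
    and "grounded V E"
    and "out_arborescence (min_subtree_verts V E (branch_verts V E))
           (induced (min_subtree_verts V E (branch_verts V E)) E)"
    and "card (branch_verts V E) \<ge> 2"
    and "\<forall>v. is_leaf V E v \<longrightarrow> indeg V E v \<noteq> 1"
  shows "\<exists>k \<ge> 1. \<exists>l \<ge> 1. subgraph_iso V E (Tk_verts k l) (Tk_edges k l)"
proof -
  have "branch_verts V E \<subseteq> V"
    unfolding branch_verts_def by blast
  then obtain r where "r \<in> V" and "\<And>u. u \<in> branch_verts V E \<Longrightarrow> (r, u) \<in> E\<^sup>*"
    using assms(1,3) min_subtree_root by blast
  moreover obtain h h0 where "height_fun E h" and "\<And>u. u \<in> branch_verts V E \<Longrightarrow> h u = h0"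
    using grounded_level[OF assms(2)] by blast
  ultimately interpret grounded_rooted_tree V E r h h0
    using assms(1,4,5) by unfold_locales auto
  have "1 \<le> card V"
    using card_V_pos by simp
  with depth_pos subgraph_iso_Tk show ?thesis
    by blast
qed

end
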